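(* Let $K\subseteq\mathbb{R}^d$ be a convex body and $\varepsilon>0$. For each $i\in I^\pm$ let $Q_i$ be a set of augmented points of $\overline{\partial}K_i$ that stabs all useful $\varepsilon$-dual caps of $K_i$. For an augmented point $q$ let $H^+(q)$ be the closed upper halfspace bounded by $h(q)$, let $P_i=\bigcap_{q\in Q_i}H^+(q)$ and $P=\bigcap_{i\in I^\pm}P_i$. Then $K\subseteq P$, the Hausdorff distance between $K$ and $P$ is at most $\varepsilon$, and the number of facets of $P$ is at most $\sum_{i\in I^\pm}|Q_i|$.
   Context: For a unit vector $u$, $H^+(u)$ is the closed supporting halfspace of $K$ with outer normal $u$. Let $e_1,\dots,e_d$ be the coordinate unit vectors, $e_{-j}=-e_j$, $I^\pm=\{\pm1,\dots,\pm d\}$, $V_i=\{u\in\mathbb{S}^{d-1}:\langle u,e_i\rangle\ge\langle u,e_j\rangle \ \forall j\in I^\pm, j\neq i\}$, $S_i=\bigcap_{u\in V_i}H^+(u)$. For fixed $i$, $e_i$ is the upward vertical direction, $X_i$ the hyperplane through the origin orthogonal to $e_i$, and $S^\downarrow$ the orthogonal projection onto $X_i$. $K^\downarrow\oplus\alpha$ is the set of points of $X_i$ within distance $\alpha$ of $K^\downarrow$; $K_i^{(\alpha)}=\{x\in S_i:x^\downarrow\in K^\downarrow\oplus\alpha\}$ and $K_i=K_i^{(2\varepsilon)}$; $K_i$ is U-shaped (for every boundary point the upward vertical ray lies in the set). The lower boundary $\overline{\partial}K_i$ is the set of boundary points with a non-vertical supporting hyperplane, each point augmented by a choice $h(q)$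 of non-vertical supporting hyperplane of $K_i$ at $q$. $q-\varepsilon$ is the vertical translate of $q$ downward by $\varepsilon$. The $\varepsilon$-dual cap induced by $q$ is the set of augmented points $p\in\overline{\partial}K_i$ such that $q-\varepsilon$ lies in the closed lower halfspace of $h(p)$. It is useful if its inducing point $q$ lies on the lower boundary of $K_i^{(\varepsilon)}$. A set stabs a collection of dual caps if each dual cap contains at least one of its points. *)

theory Defs
  imports "HOL-Analysis.Analysis" "HOL-Library.Extended_Real"
begin

(* Signed coordinate directions e_{\<pm>j}; the index set I^\<pm> is represented by
   the set of these vectors itself. *)
definition sdirs :: "'a::euclidean_space set" where
  "sdirs = Basis \<union> uminus ` Basis"

definition convex_body :: "'a::euclidean_space set \<Rightarrow> bool" where
  "convex_body K \<longleftrightarrow> compact K \<and> convex K \<and> interior K \<noteq> {}"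

definition supp :: "'a::euclidean_space set \<Rightarrow> 'a \<Rightarrow> real" where
  "supp K u = Sup ((\<lambda>x. u \<bullet> x) ` K)"

definition supp_halfspace :: "'a::euclidean_space set \<Rightarrow> 'a \<Rightarrow> 'a set" where
  "supp_halfspace K u = {x. u \<bullet> x \<le> supp K u}"

definition Vcone :: "'a::euclidean_space \<Rightarrow> 'a set" where
  "Vcone e = {u. norm u = 1 \<and> (\<forall>e'\<in>sdirs. e' \<noteq> e \<longrightarrow> u \<bullet> e' \<le> u \<bullet> e)}"

definition Sreg :: "'a::euclidean_space set \<Rightarrow> 'a \<Rightarrow> 'a set" where
  "Sreg K e = (\<Inter>u\<in>Vcone e. supp_halfspace K u)"

definition vproj :: "'a::euclidean_space \<Rightarrow> 'a \<Rightarrow> 'a" where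
  "vproj e x = x - (x \<bullet> e) *\<^sub>R e"

definition proj_nbhd :: "'a::euclidean_space set \<Rightarrow> 'a \<Rightarrow> real \<Rightarrow> 'a set" where
  "proj_nbhd K e \<alpha> = {y. y \<bullet> e = 0 \<and> (\<exists>k\<in>K. dist y (vproj e k) \<le> \<alpha>)}"

definition Kreg :: "'a::euclidean_space set \<Rightarrow> 'a \<Rightarrow> real \<Rightarrow> 'a set" where
  "Kreg K e \<alpha> = {x \<in> Sreg K e. vproj e x \<in> proj_nbhd K e \<alpha>}"

(* n is the outer normal of a non-vertical supporting hyperplane of A at p
   (the vertical axis being the line spanned by e) *)
definition nv_support :: "'a::euclidean_space set \<Rightarrow> 'a \<Rightarrow> 'a \<Rightarrow> 'a \<Rightarrow> bool" where
  "nv_support A e p n \<longleftrightarrow> n \<bullet> e \<noteq> 0 \<and> (\<forall>x\<in>A. n \<bullet> x \<le> n \<bullet> p)"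

definition lower_bd :: "'a::euclidean_space set \<Rightarrow> 'a \<Rightarrow> 'a set" where
  "lower_bd A e = {p \<in> frontier A. \<exists>n. nv_support A e p n}"

definition hausdorff_dist :: "'a::metric_space set \<Rightarrow> 'a set \<Rightarrow> ereal" where
  "hausdorff_dist A B =
     max (SUP a\<in>A. ereal (infdist a B)) (SUP b\<in>B. ereal (infdist b A))"

end

theory Submission
  imports Defs
begin

text \<open>
  Each halfspace of \<open>P\<close> supports some \<open>Kreg K e (2\<epsilon>)\<close>, which contains \<open>K\<close>; so \<open>K \<subseteq> P\<close>.
  For the distance bound, let \<open>x \<in> P\<close> be at distance \<open>\<delta> > \<epsilon>\<close> from \<open>K\<close>, \<open>y\<close> its nearest
  point in \<open>K\<close> and \<open>u = (x - y) / \<delta>\<close>, an outer normal of \<open>K\<close> at \<open>y\<close>; then \<open>u \<in> Vcone e\<close>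
  for the signed coordinate direction \<open>e\<close> closest to \<open>u\<close>. The region \<open>Sreg K e\<close> is closed,
  contains the ray in direction \<open>-e\<close> from each of its points, and all its supporting
  normals have positive \<open>e\<close>-component. So walking from \<open>y + d u\<close> in direction \<open>-e\<close>, where
  \<open>\<epsilon> < d \<le> \<delta>\<close> and the horizontal offset \<open>d |vproj e u|\<close> is at most \<open>\<epsilon>\<close>, we leave
  \<open>Sreg K e\<close> after a distance \<open>t \<ge> d\<close>, at a point \<open>q\<close> of the lower boundary of
  \<open>Kreg K e \<epsilon>\<close>. The point \<open>p\<close> stabbing the dual cap of \<open>q\<close> gives a halfspace
  \<open>n \<bullet> z \<le> n \<bullet> p\<close> of \<open>P\<close> with \<open>n \<bullet> e > 0\<close>, hence
  \<open>n \<bullet> y \<le> n \<bullet> p \<le> n \<bullet> (q + \<epsilon> e) < n \<bullet> (y + d u)\<close>; thus \<open>n \<bullet> u > 0\<close> and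
  \<open>x = y + \<delta> u\<close> violates it. Finally, \<open>P\<close> is a full-dimensional intersection of
  \<open>\<Sum>\<^sub>e |Q e|\<close> halfspaces, so it has at most that many facets.
\<close>

lemma Basis_subset_sdirs: "Basis \<subseteq> sdirs"
  unfolding sdirs_def by blast

lemma uminus_sdirs: "e \<in> sdirs \<Longrightarrow> -e \<in> sdirs"
  unfolding sdirs_def by force

lemma norm_sdirs: "e \<in> sdirs \<Longrightarrow> norm e = 1"
  unfolding sdirs_def by auto

lemma finite_sdirs: "finite sdirs"
  unfolding sdirs_def by simp

lemma sdirs_ne: "sdirs \<noteq> {}"
  using Basis_subset_sdirs nonempty_Basis by blast

lemma Vcone_inner_le: "u \<in> Vcone e \<Longrightarrow> e' \<in> sdirs \<Longrightarrow> u \<bullet> e' \<le> u \<bullet> e"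
  unfolding Vcone_def by (cases "e' = e") auto

lemma Vcone_inner_lower_bound:
  fixes u :: "'a::euclidean_space"
  assumes "u \<in> Vcone e"
  shows "1 \<le> real DIM('a) * (u \<bullet> e)"
proof -
  have abs_le: "\<bar>u \<bullet> b\<bar> \<le> u \<bullet> e" if "b \<in> Basis" for b
    using Vcone_inner_le[OF assms, of b] Vcone_inner_le[OF assms, of "-b"] that
      Basis_subset_sdirs uminus_sdirs by fastforce
  have "1 = norm u" using assms unfolding Vcone_def by simp
  also have "\<dots> \<le> (\<Sum>b\<in>Basis. \<bar>u \<bullet> b\<bar>)" by (rule norm_le_l1)
  also have "\<dots> \<le> (\<Sum>b\<in>(Basis::'a set). u \<bullet> e)" by (rule sum_mono) (rule abs_le)
  also have "\<dots> = real DIM('a) * (u \<bullet> e)" by simp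
  finally show ?thesis .
qed

lemma Vcone_inner_pos: "u \<in> Vcone e \<Longrightarrow> u \<bullet> e > 0"
  using Vcone_inner_lower_bound[of u e] by (smt (verit) mult_nonneg_nonpos of_nat_0_le_iff)

lemma ex_Vcone:
  assumes "norm u = 1"
  obtains e where "e \<in> sdirs" "u \<in> Vcone e"
proof -
  obtain e where e: "e \<in> sdirs" "u \<bullet> e = Max ((\<bullet>) u ` sdirs)"
    using Max_in[of "(\<bullet>) u ` sdirs"] finite_sdirs sdirs_ne by fastforce
  then have "u \<bullet> e' \<le> u \<bullet> e" if "e' \<in> sdirs" for e'
    unfolding e(2) using that finite_sdirs by (auto intro: Max_ge)
  with assms e(1) that show ?thesis unfolding Vcone_def by blast
qed

lemma inner_le_supp:
  assumes "compact K" and "k \<in> K"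
  shows "u \<bullet> k \<le> supp K u"
proof -
  have "bounded ((\<bullet>) u ` K)"
    using assms(1) by (intro compact_imp_bounded compact_continuous_image continuous_intros)
  then show ?thesis unfolding supp_def using assms(2) by (intro cSUP_upper bounded_imp_bdd_above)
qed

lemma supp_eq_inner: "y \<in> K \<Longrightarrow> (\<And>k. k \<in> K \<Longrightarrow> u \<bullet> k \<le> u \<bullet> y) \<Longrightarrow> supp K u = u \<bullet> y"
  unfolding supp_def by (intro cSup_eq_maximum) auto

lemma subset_Sreg: "compact K \<Longrightarrow> K \<subseteq> Sreg K e"
  unfolding Sreg_def supp_halfspace_def using inner_le_supp by blast

lemma closed_Sreg: "closed (Sreg K e)"
  unfolding Sreg_def supp_halfspace_def by (intro closed_INT) (simp add: closed_halfspace_le)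

lemma convex_Sreg: "convex (Sreg K e)"
  unfolding Sreg_def supp_halfspace_def by (intro convex_INT) (simp add: convex_halfspace_le)

lemma Sreg_add_diff_scaleR:
  fixes z v :: "'a::euclidean_space"
  assumes "z \<in> Sreg K e" and "real DIM('a) * norm v \<le> s"
  shows "z + v - s *\<^sub>R e \<in> Sreg K e"
  unfolding Sreg_def supp_halfspace_def
proof (intro INT_I CollectI)
  fix u assume u: "u \<in> Vcone e"
  have "norm v \<le> norm v * (real DIM('a) * (u \<bullet> e))"
    using mult_left_mono[OF Vcone_inner_lower_bound[OF u], of "norm v"] by simp
  also have "\<dots> = (real DIM('a) * norm v) * (u \<bullet> e)" by (simp add: ac_simps)
  also have "\<dots> \<le> s * (u \<bullet> e)"
    using assms(2) Vcone_inner_pos[OF u] by (intro mult_right_mono) auto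
  finally have "u \<bullet> v \<le> s * (u \<bullet> e)"
    using norm_cauchy_schwarz[of u v] u unfolding Vcone_def by simp
  moreover have "u \<bullet> z \<le> supp K u" using assms(1) u unfolding Sreg_def supp_halfspace_def by blast
  ultimately show "u \<bullet> (z + v - s *\<^sub>R e) \<le> supp K u" by (simp add: inner_diff_right inner_add_right)
qed

lemma Sreg_diff_scaleR: "z \<in> Sreg K e \<Longrightarrow> 0 \<le> s \<Longrightarrow> z - s *\<^sub>R e \<in> Sreg K e"
  using Sreg_add_diff_scaleR[of z K e 0 s] by simp

lemma Sreg_support_pos:
  fixes n :: "'a::euclidean_space"
  assumes "q \<in> Sreg K e" and "n \<noteq> 0" and supp: "\<And>z. z \<in> Sreg K e \<Longrightarrow> n \<bullet> z \<le> n \<bullet> q"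
  shows "n \<bullet> e > 0"
proof -
  define s where "s = real DIM('a) * norm n"
  have "n \<bullet> (q + n - s *\<^sub>R e) \<le> n \<bullet> q" by (rule supp, rule Sreg_add_diff_scaleR) (use assms s_def in auto)
  then have "n \<bullet> n \<le> s * (n \<bullet> e)" by (simp add: inner_diff_right inner_add_right)
  moreover have "n \<bullet> n > 0" "s \<ge> 0" using assms(2) s_def by auto
  ultimately show ?thesis by (smt (verit) mult_nonneg_nonpos)
qed

lemma linear_vproj: "linear (vproj e)"
  unfolding vproj_def by (rule linearI) (simp_all add: inner_add_left algebra_simps)

lemma vproj_diff_scaleR: "norm e = 1 \<Longrightarrow> vproj e (x - s *\<^sub>R e) = vproj e x"
  unfolding vproj_def by (simp add: inner_diff_left algebra_simps dot_square_norm)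

lemma vproj_orthogonal: "norm e = 1 \<Longrightarrow> vproj e x \<bullet> e = 0"
  unfolding vproj_def by (simp add: inner_diff_left dot_square_norm)

lemma norm_vproj_sq: "norm e = 1 \<Longrightarrow> (norm (vproj e u))\<^sup>2 = (norm u)\<^sup>2 - (u \<bullet> e)\<^sup>2"
  unfolding vproj_def power2_norm_eq_inner norm_eq_1
  by (simp add: inner_diff_left inner_diff_right inner_commute power2_eq_square)

lemma subset_Kreg:
  assumes "compact K" "norm e = 1" "0 \<le> \<alpha>"
  shows "K \<subseteq> Kreg K e \<alpha>"
proof
  fix k assume "k \<in> K"
  then have "vproj e k \<in> proj_nbhd K e \<alpha>"
    unfolding proj_nbhd_def using assms(2,3) by (auto intro!: bexI[of _ k] simp: vproj_orthogonal)
  with \<open>k \<in> K\<close> subset_Sreg[OF assms(1)] show "k \<in> Kreg K e \<alpha>" unfolding Kreg_def by blast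
qed

lemma Kreg_subset_Sreg: "Kreg K e \<alpha> \<subseteq> Sreg K e"
  unfolding Kreg_def by blast

lemma Kreg_diff_scaleR:
  "x \<in> Kreg K e \<alpha> \<Longrightarrow> norm e = 1 \<Longrightarrow> 0 \<le> s \<Longrightarrow> x - s *\<^sub>R e \<in> Kreg K e \<alpha>"
  unfolding Kreg_def by (simp add: Sreg_diff_scaleR vproj_diff_scaleR)

lemma nv_support_pos:
  assumes "nv_support A e p n" and "y \<in> A" and ray: "\<And>s. 0 \<le> s \<Longrightarrow> y - s *\<^sub>R e \<in> A"
  shows "n \<bullet> e > 0"
proof (rule ccontr)
  assume "\<not> n \<bullet> e > 0"
  then have neg: "n \<bullet> e < 0" using assms(1) unfolding nv_support_def by auto
  have le: "n \<bullet> x \<le> n \<bullet> p" if "x \<in> A" for x using assms(1) that unfolding nv_support_def by blast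
  define s where "s = (n \<bullet> p - n \<bullet> y + 1) / - (n \<bullet> e)"
  have "s \<ge> 0" unfolding s_def using neg le[OF assms(2)] by (simp add: divide_nonneg_neg)
  then have "n \<bullet> (y - s *\<^sub>R e) \<le> n \<bullet> p" by (intro le ray)
  moreover have "s * (n \<bullet> e) = - (n \<bullet> p - n \<bullet> y + 1)" unfolding s_def using neg by simp
  then have "n \<bullet> (y - s *\<^sub>R e) = n \<bullet> p + 1" by (simp add: inner_diff_right)
  ultimately show False by simp
qed

lemma lower_bd_KregI:
  assumes "compact K" and "interior K \<noteq> {}"
    and q: "q \<in> Kreg K e \<alpha>" "q \<notin> interior (Sreg K e)"
  shows "q \<in> lower_bd (Kreg K e \<alpha>) e"
proof -
  have "interior (Sreg K e) \<noteq> {}" using interior_mono[OF subset_Sreg[OF assms(1)]] assms(2) by blast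
  then have "q \<notin> rel_interior (Sreg K e)" using q(2) by (simp add: rel_interior_nonempty_interior)
  moreover have "q \<in> closure (Sreg K e)" using q(1) Kreg_subset_Sreg closure_subset by blast
  ultimately obtain a where "a \<noteq> 0" and a_cl: "\<And>z. z \<in> closure (Sreg K e) \<Longrightarrow> a \<bullet> q \<le> a \<bullet> z"
    using supporting_hyperplane_relative_frontier[OF convex_Sreg] by blast
  have a: "a \<bullet> q \<le> a \<bullet> z" if "z \<in> Sreg K e" for z using a_cl that closure_subset by blast
  have supp: "(- a) \<bullet> z \<le> (- a) \<bullet> q" if "z \<in> Sreg K e" for z using a[OF that] by simp
  have "(- a) \<bullet> e > 0" using q(1) Kreg_subset_Sreg \<open>a \<noteq> 0\<close> by (intro Sreg_support_pos[OF _ _ supp]) auto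
  then have "nv_support (Kreg K e \<alpha>) e q (- a)"
    unfolding nv_support_def using supp Kreg_subset_Sreg by fastforce
  moreover have "q \<in> frontier (Kreg K e \<alpha>)"
    using q closure_subset interior_mono[OF Kreg_subset_Sreg] unfolding frontier_def by blast
  ultimately show ?thesis unfolding lower_bd_def by blast
qed

lemma lowest_point_in_closed:
  fixes w e :: "'a::real_normed_vector"
  assumes "closed A" and "e \<noteq> 0" and "w - t *\<^sub>R e \<in> A" and below: "\<And>t. w - t *\<^sub>R e \<in> A \<Longrightarrow> c \<le> t"
  obtains t0 where "c \<le> t0" "w - t0 *\<^sub>R e \<in> A" "w - t0 *\<^sub>R e \<notin> interior A"
proof -
  define T where "T = (\<lambda>t. w - t *\<^sub>R e) -` A"
  have "closed T" unfolding T_def by (intro continuous_closed_vimage assms(1) continuous_intros)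
  moreover have "bdd_below T" "T \<noteq> {}" using below assms(3) unfolding T_def bdd_below_def by auto
  ultimately have "Inf T \<in> T" by (intro closed_contains_Inf)
  have "w - Inf T *\<^sub>R e \<notin> interior A"
  proof
    assume "w - Inf T *\<^sub>R e \<in> interior A"
    then obtain r where "r > 0" and r: "ball (w - Inf T *\<^sub>R e) r \<subseteq> A" by (meson mem_interior)
    define s where "s = r / (2 * norm e)"
    have "s > 0" using \<open>r > 0\<close> assms(2) by (simp add: s_def)
    have "w - (Inf T - s) *\<^sub>R e \<in> ball (w - Inf T *\<^sub>R e) r"
      using \<open>r > 0\<close> assms(2) by (simp add: s_def dist_norm algebra_simps)
    then have "Inf T - s \<in> T" using r unfolding T_def by auto
    then have "Inf T \<le> Inf T - s" using \<open>bdd_below T\<close> by (rule cInf_lower)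
    then show False using \<open>s > 0\<close> by simp
  qed
  with \<open>Inf T \<in> T\<close> below that show ?thesis unfolding T_def by auto
qed

lemma lower_bd_point_above:
  assumes "compact K" and "interior K \<noteq> {}" and "norm e = 1" and "y \<in> K"
    and u: "u \<in> Vcone e" "supp K u = u \<bullet> y" and "0 < d" and "d * norm (vproj e u) \<le> \<alpha>"
  obtains t where "d \<le> t" "y + d *\<^sub>R u - t *\<^sub>R e \<in> lower_bd (Kreg K e \<alpha>) e"
proof -
  define w where "w = y + d *\<^sub>R u"
  have "norm u = 1" using u(1) unfolding Vcone_def by simp
  have above: "d \<le> t" if "w - t *\<^sub>R e \<in> Sreg K e" for t
  proof -
    have "w - t *\<^sub>R e \<in> supp_halfspace K u" using that u(1) unfolding Sreg_def by blast
    then have "u \<bullet> (w - t *\<^sub>R e) \<le> u \<bullet> y" using u(2) unfolding supp_halfspace_def by simp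
    then have "d \<le> t * (u \<bullet> e)"
      using \<open>norm u = 1\<close> by (simp add: w_def inner_diff_right inner_add_right norm_eq_1)
    moreover have "0 < u \<bullet> e" by (rule Vcone_inner_pos[OF u(1)])
    moreover have "u \<bullet> e \<le> 1"
      using norm_cauchy_schwarz[of u e] \<open>norm u = 1\<close> \<open>norm e = 1\<close> by simp
    moreover have "0 < t"
      using zero_less_mult_pos2[of t "u \<bullet> e"] \<open>0 < d\<close> calculation by linarith
    ultimately show ?thesis using mult_left_le[of "u \<bullet> e" t] by linarith
  qed
  have "w - (real DIM('a) * d) *\<^sub>R e \<in> Sreg K e"
    unfolding w_def using subset_Sreg[OF assms(1)] \<open>y \<in> K\<close> \<open>norm u = 1\<close> \<open>0 < d\<close>
    by (intro Sreg_add_diff_scaleR) auto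
  moreover have "e \<noteq> 0" using \<open>norm e = 1\<close> by auto
  ultimately obtain t where t: "d \<le> t" "w - t *\<^sub>R e \<in> Sreg K e" "w - t *\<^sub>R e \<notin> interior (Sreg K e)"
    using lowest_point_in_closed[OF closed_Sreg _ _ above] by blast
  have "vproj e (w - t *\<^sub>R e) = vproj e y + d *\<^sub>R vproj e u"
    unfolding w_def vproj_diff_scaleR[OF \<open>norm e = 1\<close>]
    by (simp add: linear_add[OF linear_vproj] linear_scale[OF linear_vproj])
  then have "dist (vproj e (w - t *\<^sub>R e)) (vproj e y) \<le> \<alpha>"
    using \<open>0 < d\<close> assms(8) by (simp add: dist_norm)
  then have "vproj e (w - t *\<^sub>R e) \<in> proj_nbhd K e \<alpha>"
    unfolding proj_nbhd_def using \<open>y \<in> K\<close> vproj_orthogonal[OF \<open>norm e = 1\<close>] by blast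
  with t(2) have "w - t *\<^sub>R e \<in> Kreg K e \<alpha>" unfolding Kreg_def by blast
  with t(1,3) that show ?thesis unfolding w_def using lower_bd_KregI[OF assms(1,2)] by blast
qed

lemma nearest_point_outer_normal:
  fixes x :: "'a::euclidean_space"
  assumes "closed K" "convex K" "K \<noteq> {}" "x \<notin> K"
  obtains y u where "y \<in> K" "norm u = 1" "x = y + infdist x K *\<^sub>R u" "supp K u = u \<bullet> y"
proof -
  obtain y where "y \<in> K" and "infdist x K = dist x y"
    using infdist_attains_inf[OF assms(1,3)] by blast
  then have nearest: "dist x y \<le> dist x k" if "k \<in> K" for k using infdist_le[OF that, of x] by simp
  define u where "u = (1 / dist x y) *\<^sub>R (x - y)"
  have "dist x y > 0" using assms(4) \<open>y \<in> K\<close> by auto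
  with \<open>infdist x K = dist x y\<close> have "x = y + infdist x K *\<^sub>R u" by (simp add: u_def)
  moreover have "u \<bullet> k \<le> u \<bullet> y" if "k \<in> K" for k
  proof -
    have "(x - y) \<bullet> (k - y) \<le> 0" using any_closest_point_dot[OF assms(2,1) \<open>y \<in> K\<close> that] nearest by blast
    then have "(1 / dist x y) * ((x - y) \<bullet> (k - y)) \<le> 0"
      using \<open>dist x y > 0\<close> by (intro mult_nonneg_nonpos) auto
    then show ?thesis by (simp only: u_def inner_scaleR_left inner_diff_right) (simp add: diff_divide_distrib)
  qed
  ultimately show ?thesis using \<open>y \<in> K\<close> \<open>dist x y > 0\<close>
    by (intro that[of y u] supp_eq_inner) (auto simp: u_def dist_norm)
qed

lemma exists_scaled_le_between:
  fixes \<sigma> \<epsilon> \<delta> :: real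
  assumes "0 \<le> \<sigma>" "\<sigma> < 1" "0 < \<epsilon>" "\<epsilon> < \<delta>"
  obtains d where "\<epsilon> < d" "d \<le> \<delta>" "d * \<sigma> \<le> \<epsilon>"
proof
  define d where "d = min \<delta> (2 * \<epsilon> / (1 + \<sigma>))"
  show "\<epsilon> < d" using assms by (simp add: d_def field_simps)
  show "d \<le> \<delta>" by (simp add: d_def)
  have "d * \<sigma> \<le> 2 * \<epsilon> / (1 + \<sigma>) * \<sigma>" unfolding d_def by (rule mult_right_mono[OF min.cobounded2 assms(1)])
  also have "\<dots> \<le> \<epsilon>" using assms by (simp add: field_simps)
  finally show "d * \<sigma> \<le> \<epsilon>" .
qed

lemma infdist_le_if_stabbed:
  fixes K :: "'a::euclidean_space set"
  assumes "convex_body K" and "0 < \<epsilon>" and "0 \<le> \<beta>"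
    and nv: "\<And>e p. e \<in> sdirs \<Longrightarrow> p \<in> Q e \<Longrightarrow> nv_support (Kreg K e \<beta>) e p (h e p)"
    and stab: "\<And>e q. e \<in> sdirs \<Longrightarrow> q \<in> lower_bd (Kreg K e \<epsilon>) e
                 \<Longrightarrow> \<exists>p\<in>Q e. h e p \<bullet> (q + \<epsilon> *\<^sub>R e) \<ge> h e p \<bullet> p"
    and x: "\<And>e p. e \<in> sdirs \<Longrightarrow> p \<in> Q e \<Longrightarrow> h e p \<bullet> x \<le> h e p \<bullet> p"
  shows "infdist x K \<le> \<epsilon>"
proof (rule ccontr)
  assume "\<not> infdist x K \<le> \<epsilon>"
  have K: "compact K" "convex K" "interior K \<noteq> {}" "K \<noteq> {}"
    using assms(1) interior_subset unfolding convex_body_def by auto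
  define \<delta> where "\<delta> = infdist x K"
  have "x \<notin> K" using \<open>\<not> infdist x K \<le> \<epsilon>\<close> assms(2) infdist_zero by fastforce
  then obtain y u where "y \<in> K" "norm u = 1" and x_eq: "x = y + \<delta> *\<^sub>R u" and "supp K u = u \<bullet> y"
    using nearest_point_outer_normal[OF compact_imp_closed K(2,4)] K(1) unfolding \<delta>_def by blast
  obtain e where e: "e \<in> sdirs" "u \<in> Vcone e" using ex_Vcone[OF \<open>norm u = 1\<close>] by blast
  have "(norm (vproj e u))\<^sup>2 < 1"
    using norm_vproj_sq[OF norm_sdirs[OF e(1)]] \<open>norm u = 1\<close> Vcone_inner_pos[OF e(2)] by simp
  then have "norm (vproj e u) < 1" by (simp add: abs_square_less_1)
  then obtain d where d: "\<epsilon> < d" "d \<le> \<delta>" "d * norm (vproj e u) \<le> \<epsilon>"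
    using exists_scaled_le_between[OF norm_ge_zero _ \<open>0 < \<epsilon>\<close>] \<open>\<not> infdist x K \<le> \<epsilon>\<close>
    unfolding \<delta>_def by (meson not_le)
  have "0 < d" using d(1) assms(2) by linarith
  with lower_bd_point_above[OF K(1,3) norm_sdirs[OF e(1)] \<open>y \<in> K\<close> e(2) \<open>supp K u = u \<bullet> y\<close>] d(3)
  obtain t where "d \<le> t" and q: "y + d *\<^sub>R u - t *\<^sub>R e \<in> lower_bd (Kreg K e \<epsilon>) e"
    by blast
  then obtain p where "p \<in> Q e" and p: "h e p \<bullet> (y + d *\<^sub>R u - t *\<^sub>R e + \<epsilon> *\<^sub>R e) \<ge> h e p \<bullet> p"
    using stab[OF e(1)] by blast
  define n where "n = h e p"
  have y_Kreg: "y \<in> Kreg K e \<beta>" using subset_Kreg[OF K(1) norm_sdirs[OF e(1)] assms(3)] \<open>y \<in> K\<close> by blast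
  have "n \<bullet> e > 0"
    using nv_support_pos[OF nv[OF e(1) \<open>p \<in> Q e\<close>] y_Kreg] Kreg_diff_scaleR[OF y_Kreg norm_sdirs[OF e(1)]]
    unfolding n_def by blast
  have "n \<bullet> y \<le> n \<bullet> p" using nv[OF e(1) \<open>p \<in> Q e\<close>] y_Kreg unfolding nv_support_def n_def by blast
  have "n \<bullet> p \<le> n \<bullet> y + d * (n \<bullet> u) - (t - \<epsilon>) * (n \<bullet> e)"
    using p unfolding n_def by (simp add: inner_add_right inner_diff_right algebra_simps)
  moreover have "0 < (t - \<epsilon>) * (n \<bullet> e)" using \<open>n \<bullet> e > 0\<close> \<open>d \<le> t\<close> d(1) by simp
  ultimately have "n \<bullet> p < n \<bullet> y + d * (n \<bullet> u)" "0 < n \<bullet> u"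
    using \<open>n \<bullet> y \<le> n \<bullet> p\<close> d(1) assms(2) by (smt (verit) zero_less_mult_iff)+
  with d(2) have "n \<bullet> p < n \<bullet> y + \<delta> * (n \<bullet> u)" by (smt (verit) mult_right_mono)
  then have "n \<bullet> p < n \<bullet> x" unfolding x_eq by (simp add: inner_add_right)
  with x[OF e(1) \<open>p \<in> Q e\<close>] show False unfolding n_def by simp
qed

lemma hausdorff_dist_le:
  assumes "A \<subseteq> B" and "0 \<le> \<epsilon>" and "\<And>b. b \<in> B \<Longrightarrow> infdist b A \<le> \<epsilon>"
  shows "hausdorff_dist A B \<le> ereal \<epsilon>"
  unfolding hausdorff_dist_def using assms by (auto intro!: SUP_least simp: infdist_zero subsetD)

lemma card_facets_Inter_halfspaces_le:
  fixes a :: "'i \<Rightarrow> 'a::euclidean_space"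
  assumes "finite I" and S: "S = (\<Inter>i\<in>I. {x. a i \<bullet> x \<le> b i})"
    and a: "\<And>i. i \<in> I \<Longrightarrow> a i \<noteq> 0" and "interior S \<noteq> {}"
  shows "card {C. C facet_of S} \<le> card I"
proof -
  define H where "H i = {x. a i \<bullet> x \<le> b i}" for i
  obtain J where J: "J \<subseteq> I" "S = \<Inter>(H ` J)"
    and minimal: "\<And>J'. J' \<subseteq> I \<Longrightarrow> S = \<Inter>(H ` J') \<Longrightarrow> card J \<le> card J'"
    using ex_has_least_nat[of "\<lambda>J. J \<subseteq> I \<and> S = \<Inter>(H ` J)" I card] S unfolding H_def by auto
  have "finite J" using J(1) \<open>finite I\<close> by (rule finite_subset)
  define A where "A h = a (inv_into J H h)" for h
  define B where "B h = b (inv_into J H h)" for h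
  have AB: "A h \<noteq> 0 \<and> h = {x. A h \<bullet> x \<le> B h}" if "h \<in> H ` J" for h
    using that J(1) a f_inv_into_f[OF that] inv_into_into[OF that]
    unfolding A_def B_def H_def by fastforce
  have "affine hull S = UNIV" using assms(4) by (rule affine_hull_nonempty_interior)
  \<comment> \<open>Minimality of \<open>J\<close> is the irredundancy needed by \<open>facet_of_polyhedron_explicit\<close>.\<close>
  have psub: "S \<subset> affine hull S \<inter> \<Inter>F" if "F \<subset> H ` J" for F
  proof -
    define J' where "J' = {j \<in> J. H j \<in> F}"
    have "H ` J' = F" "J' \<subset> J" using that unfolding J'_def by auto
    then have "card J' < card J" using \<open>finite J\<close> by (simp add: psubset_card_mono)
    then have "S \<noteq> \<Inter>F" using minimal[of J'] \<open>H ` J' = F\<close> \<open>J' \<subset> J\<close> J(1) by auto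
    moreover have "S \<subseteq> \<Inter>F" using J(2) that by auto
    ultimately show ?thesis using \<open>affine hull S = UNIV\<close> by auto
  qed
  have "{C. C facet_of S} \<subseteq> (\<lambda>h. S \<inter> {x. A h \<bullet> x = B h}) ` (H ` J)"
    using facet_of_polyhedron_explicit[of "H ` J" S A B] \<open>finite J\<close> J(2) AB psub
      \<open>affine hull S = UNIV\<close> by auto
  then have "card {C. C facet_of S} \<le> card (H ` J)"
    using \<open>finite J\<close> by (meson card_image_le finite_imageI le_trans surj_card_le)
  also have "\<dots> \<le> card I" using \<open>finite I\<close> J(1) card_image_le[OF \<open>finite J\<close>, of H]
    by (meson card_mono le_trans)
  finally show ?thesis .
qed

theorem lemma7:
  fixes K :: "'a::euclidean_space set" and \<epsilon> :: real
    and h :: "'a \<Rightarrow> 'a \<Rightarrow> 'a" and Q :: "'a \<Rightarrow> 'a set"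
  assumes "convex_body K" and "\<epsilon> > 0"
    and aug: "\<And>e p. e \<in> sdirs \<Longrightarrow> p \<in> lower_bd (Kreg K e (2 * \<epsilon>)) e
                 \<Longrightarrow> nv_support (Kreg K e (2 * \<epsilon>)) e p (h e p)"
    and Qsub: "\<And>e. e \<in> sdirs \<Longrightarrow> Q e \<subseteq> lower_bd (Kreg K e (2 * \<epsilon>)) e"
    and stab: "\<And>e q. e \<in> sdirs \<Longrightarrow> q \<in> lower_bd (Kreg K e \<epsilon>) e
                 \<Longrightarrow> \<exists>p\<in>Q e. h e p \<bullet> (q + \<epsilon> *\<^sub>R e) \<ge> h e p \<bullet> p"
  defines "P \<equiv> (\<Inter>e\<in>sdirs. \<Inter>p\<in>Q e. {x. h e p \<bullet> x \<le> h e p \<bullet> p})"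
  shows "K \<subseteq> P \<and> hausdorff_dist K P \<le> ereal \<epsilon> \<and>
         ((\<forall>e\<in>sdirs. finite (Q e)) \<longrightarrow>
            card {F. F facet_of P} \<le> (\<Sum>e\<in>sdirs. card (Q e)))"
proof (intro conjI impI)
  have "compact K" "interior K \<noteq> {}" using assms(1) unfolding convex_body_def by auto
  have nv: "nv_support (Kreg K e (2 * \<epsilon>)) e p (h e p)" if "e \<in> sdirs" "p \<in> Q e" for e p
    using aug Qsub that by blast
  show "K \<subseteq> P"
    using nv subset_Kreg[OF \<open>compact K\<close> norm_sdirs] \<open>\<epsilon> > 0\<close> unfolding P_def nv_support_def
    by (fastforce simp: subset_iff)
  moreover have "infdist x K \<le> \<epsilon>" if "x \<in> P" for x
    using infdist_le_if_stabbed[OF assms(1,2) _ nv stab] that \<open>\<epsilon> > 0\<close> unfolding P_def by auto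
  ultimately show "hausdorff_dist K P \<le> ereal \<epsilon>" using \<open>\<epsilon> > 0\<close> by (intro hausdorff_dist_le) auto
  assume "\<forall>e\<in>sdirs. finite (Q e)"
  then have "finite (Sigma sdirs Q)" using finite_sdirs by blast
  moreover have "P = (\<Inter>i\<in>Sigma sdirs Q. {x. case_prod h i \<bullet> x \<le> (\<lambda>(e, p). h e p \<bullet> p) i})"
    unfolding P_def by auto
  moreover have "case_prod h i \<noteq> 0" if "i \<in> Sigma sdirs Q" for i
    using nv that unfolding nv_support_def by fastforce
  moreover have "interior P \<noteq> {}" using interior_mono[OF \<open>K \<subseteq> P\<close>] \<open>interior K \<noteq> {}\<close> by blast
  ultimately have "card {F. F facet_of P} \<le> card (Sigma sdirs Q)"
    by (rule card_facets_Inter_halfspaces_le)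
  also have "\<dots> = (\<Sum>e\<in>sdirs. card (Q e))" using \<open>\<forall>e\<in>sdirs. finite (Q e)\<close> by (rule card_SigmaI[OF finite_sdirs])
  finally show "card {F. F facet_of P} \<le> (\<Sum>e\<in>sdirs. card (Q e))" .
qed

end
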